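(* Let $n\ge 2$ and $x_0\in\mathbb{R}$. Then $$\psi(x_0+iy)=A\,|y|\,(1+o(1)),\qquad y\to 0,\ y\neq 0,$$ where $$A=\int_{\widetilde D_{x_0}}\left|\sum_{k=1}^{n-1}k(k+1)t_kx_0^{k-1}\right|^2dt_1\dots dt_{n-1},$$ and $\widetilde D_{x_0}$ is the set of $(t_1,\dots,t_{n-1})\in\mathbb{R}^{n-1}$ with $\max_{1\le k\le n-1}|t_k|\le1$, $\left|\sum_{k=1}^{n-1}kt_kx_0^{k+1}\right|\le1$ and $\left|\sum_{k=1}^{n-1}(k+1)t_kx_0^{k}\right|\le1$.
   Context: For $z\in\mathbb{C}\setminus\mathbb{R}$, let $D_z$ be the set of $(t_1,\dots,t_{n-1})\in\mathbb{R}^{n-1}$ with $\max_{1\le k\le n-1}|t_k|\le 1$, $\left|z\sum_{k=1}^{n-1}t_k\left(z^k-\frac{\Im z^{k+1}}{\Im z}\right)\right|\le 1$ and $\left|\frac{1}{\Im z}\sum_{k=1}^{n-1}t_k\Im z^{k+1}\right|\le 1$, and define $$\psi(z)=\frac{1}{|\Im z|}\int_{D_z}\left|\sum_{k=1}^{n-1}t_k\left((k+1)z^{k}-\frac{\Im z^{k+1}}{\Im z}\right)\right|^2dt_1\dots dt_{n-1}.$$ *)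

theory Defs
  imports "HOL-Analysis.Analysis" "HOL-Library.Landau_Symbols"
begin

text \<open>Points of R^(n-1) are functions nat => real, coordinates indexed by k in {1..n-1};
  Lebesgue measure on R^(n-1) is the product measure PiM {1..n-1} (lambda _. lborel).\<close>

definition lebRn :: "nat \<Rightarrow> (nat \<Rightarrow> real) measure" where
  "lebRn n = PiM {1..n-1} (\<lambda>_. lborel)"

definition Dz :: "nat \<Rightarrow> complex \<Rightarrow> (nat \<Rightarrow> real) set" where
  "Dz n z = {t \<in> space (lebRn n).
      (\<forall>k\<in>{1..n-1}. \<bar>t k\<bar> \<le> 1) \<and>
      cmod (z * (\<Sum>k=1..n-1. complex_of_real (t k) *
                 (z ^ k - complex_of_real (Im (z ^ (k+1)) / Im z)))) \<le> 1 \<and>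
      \<bar>(1 / Im z) * (\<Sum>k=1..n-1. t k * Im (z ^ (k+1)))\<bar> \<le> 1}"

definition psi :: "nat \<Rightarrow> complex \<Rightarrow> real" where
  "psi n z = (1 / \<bar>Im z\<bar>) *
     (\<integral>t. indicator (Dz n z) t *
        (cmod (\<Sum>k=1..n-1. complex_of_real (t k) *
           (of_nat (k+1) * z ^ k - complex_of_real (Im (z ^ (k+1)) / Im z))))\<^sup>2 \<partial>lebRn n)"

definition Dtilde :: "nat \<Rightarrow> real \<Rightarrow> (nat \<Rightarrow> real) set" where
  "Dtilde n x0 = {t \<in> space (lebRn n).
      (\<forall>k\<in>{1..n-1}. \<bar>t k\<bar> \<le> 1) \<and>
      \<bar>\<Sum>k=1..n-1. real k * t k * x0 ^ (k+1)\<bar> \<le> 1 \<and>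
      \<bar>\<Sum>k=1..n-1. real (k+1) * t k * x0 ^ k\<bar> \<le> 1}"

definition Aconst :: "nat \<Rightarrow> real \<Rightarrow> real" where
  "Aconst n x0 = (\<integral>t. indicator (Dtilde n x0) t *
      (\<bar>\<Sum>k=1..n-1. real k * real (k+1) * t k * x0 ^ (k-1)\<bar>)\<^sup>2 \<partial>lebRn n)"

end

theory Submission
  imports Defs
begin

text \<open>
  Write \<open>z = x0 + iy\<close>.  For \<open>Im z \<noteq> 0\<close> the quotient \<open>Im (z^(k+1)) / Im z\<close> is the
  divided difference \<open>(z^(k+1) - w^(k+1)) / (z - w)\<close> at \<open>w = cnj z\<close>, a polynomial
  \<open>pow_quot k z w\<close> in \<open>z, w\<close>; likewise \<open>(k+1) z^k - pow_quot k z w = (z - w) pow_quot2 k z w\<close>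
  with a second polynomial \<open>pow_quot2\<close>.  Since \<open>z - cnj z = 2iy\<close>, the integrand of \<open>psi\<close>
  divided by \<open>y\<^sup>2\<close> equals \<open>1_{D_z}(t) (2 |\<Sum> t_k pow_quot2 k z (cnj z)|)\<^sup>2\<close>, which
  as \<open>y \<rightarrow> 0\<close> converges to the integrand of \<open>A\<close> (on the diagonal,
  \<open>2 pow_quot2 k x x = k(k+1) x^(k-1)\<close>), except on the null set where one of the two
  defining constraints of \<open>D~\<close> holds with equality (finitely many hyperplanes).
  All integrands live on the cube \<open>[-1,1]^(n-1)\<close> and are uniformly bounded for
  \<open>|y| \<le> 1\<close>, so dominated convergence gives \<open>psi(x0+iy) / |y| \<rightarrow> A\<close>.  Finally
  \<open>A > 0\<close>, because \<open>D~\<close> contains a small cube and the polynomial in the integrand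
  of \<open>A\<close> vanishes only on a hyperplane; hence \<open>psi(x0+iy) \<sim> A |y|\<close>.
\<close>

subsection \<open>Divided differences of powers\<close>

text \<open>\<open>pow_quot k z w\<close> is the divided difference \<open>(z^(k+1) -
  w^(k+1)) / (z - w)\<close>, written as a polynomial.\<close>

definition pow_quot :: "nat \<Rightarrow> 'a::comm_ring_1 \<Rightarrow> 'a \<Rightarrow> 'a" where
  "pow_quot k z w = (\<Sum>i<k+1. w ^ (k - i) * z ^ i)"

text \<open>\<open>pow_quot2 k z w\<close> is the divided difference of \<open>pow_quot k
  z\<close> between the diagonal value \<open>(k+1) z^k\<close> and \<open>pow_quot k z
  w\<close>.\<close>

definition pow_quot2 :: "nat \<Rightarrow> 'a::comm_ring_1 \<Rightarrow> 'a \<Rightarrow> 'a" where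
  "pow_quot2 k z w = (\<Sum>i<k. z ^ i * pow_quot (k - i - 1) z w)"

lemma pow_quot_eq: "z ^ (k+1) - w ^ (k+1) = (z - w) * pow_quot k z w"
  unfolding pow_quot_def using power_diff_sumr2[of z "k+1" w] by simp

lemma pow_quot2_eq: "of_nat (k+1) * z ^ k - pow_quot k z w = (z - w) * pow_quot2 k z w"
proof -
  have "of_nat (k+1) * z ^ k - pow_quot k z w = (\<Sum>i<k+1. z ^ i * (z ^ (k-i) - w ^ (k-i)))"
    unfolding pow_quot_def
    by (simp add: sum_subtractf algebra_simps power_add[symmetric] del: of_nat_Suc)
  also have "\<dots> = (\<Sum>i<k. z ^ i * (z ^ (k-i) - w ^ (k-i)))"
    by (simp add: lessThan_Suc)
  also have "\<dots> = (\<Sum>i<k. (z - w) * (z ^ i * pow_quot (k - i - 1) z w))"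
  proof (intro sum.cong refl)
    fix i assume "i \<in> {..<k}"
    then have "k - i = (k - i - 1) + 1" by simp
    then have "z ^ (k-i) - w ^ (k-i) = (z - w) * pow_quot (k - i - 1) z w"
      using pow_quot_eq[of z "k - i - 1" w] by simp
    then show "z ^ i * (z ^ (k-i) - w ^ (k-i)) = (z - w) * (z ^ i * pow_quot (k - i - 1) z w)"
      by (simp only: mult.left_commute)
  qed
  also have "\<dots> = (z - w) * pow_quot2 k z w"
    unfolding pow_quot2_def by (simp add: sum_distrib_left)
  finally show ?thesis .
qed

lemma pow_quot_diag: "pow_quot k x x = of_nat (k+1) * x ^ k"
  unfolding pow_quot_def by (simp add: power_add[symmetric])

text \<open>On the diagonal the second divided difference is half the second derivative of
  \<open>z^(k+1)\<close>.\<close>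

lemma pow_quot2_diag: "2 * pow_quot2 k x x = of_nat (k * (k+1)) * x ^ (k-1)"
proof -
  have "pow_quot2 k x x = (\<Sum>i<k. of_nat (k - i) * x ^ (k-1))"
    unfolding pow_quot2_def pow_quot_diag
  proof (intro sum.cong refl)
    fix i assume "i \<in> {..<k}"
    then have "x ^ i * x ^ (k - i - 1) = x ^ (k-1)"
      by (simp flip: power_add)
    then show "x ^ i * (of_nat (k - i - 1 + 1) * x ^ (k - i - 1)) = of_nat (k - i) * x ^ (k-1)"
      using \<open>i \<in> {..<k}\<close> by (simp add: algebra_simps)
  qed
  also have "\<dots> = of_nat (\<Sum>i<k. k - i) * x ^ (k-1)"
    by (simp add: sum_distrib_right)
  also have "(\<Sum>i<k. k - i) = (\<Sum>i\<le>k. i)"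
    using sum.nat_diff_reindex[of "\<lambda>i. i" "k+1"] by (simp add: lessThan_Suc lessThan_Suc_atMost[symmetric])
  finally have "2 * pow_quot2 k x x = of_nat (2 * (\<Sum>i\<le>k. i)) * x ^ (k-1)"
    by (simp add: mult.assoc)
  also have "2 * (\<Sum>i\<le>k. i) = k * (k+1)"
    using double_gauss_sum[of k, where 'a=nat] by (simp add: atLeast0AtMost)
  finally show ?thesis .
qed

lemma Im_power_quot:
  assumes "Im z \<noteq> 0"
  shows "complex_of_real (Im (z ^ (k+1)) / Im z) = pow_quot k z (cnj z)"
proof -
  have d: "z - cnj z = complex_of_real (2 * Im z) * \<i>" by (rule complex_diff_cnj)
  have n: "z ^ (k+1) - cnj z ^ (k+1) = complex_of_real (2 * Im (z ^ (k+1))) * \<i>"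
    using complex_diff_cnj[of "z ^ (k+1)"] by simp
  have "z - cnj z \<noteq> 0" using d assms by simp
  then have "pow_quot k z (cnj z) = (z ^ (k+1) - cnj z ^ (k+1)) / (z - cnj z)"
    using pow_quot_eq[of z k "cnj z"] by (simp add: field_simps)
  also have "\<dots> = complex_of_real (Im (z ^ (k+1)) / Im z)"
    unfolding d n using assms by (simp add: field_simps)
  finally show ?thesis by simp
qed

lemma tendsto_pow_quot [tendsto_intros]:
  fixes f g :: "'b \<Rightarrow> 'a::real_normed_field"
  assumes "(f \<longlongrightarrow> a) F" "(g \<longlongrightarrow> b) F"
  shows "((\<lambda>x. pow_quot k (f x) (g x)) \<longlongrightarrow> pow_quot k a b) F"
  unfolding pow_quot_def by (intro tendsto_intros assms)

lemma tendsto_pow_quot2 [tendsto_intros]: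
  fixes f g :: "'b \<Rightarrow> 'a::real_normed_field"
  assumes "(f \<longlongrightarrow> a) F" "(g \<longlongrightarrow> b) F"
  shows "((\<lambda>x. pow_quot2 k (f x) (g x)) \<longlongrightarrow> pow_quot2 k a b) F"
  unfolding pow_quot2_def by (intro tendsto_intros assms)

lemma dominated_convergence_at:
  fixes s :: "'p::first_countable_topology \<Rightarrow> 'a \<Rightarrow> 'b::{banach, second_countable_topology}"
  assumes nontriv: "at a \<noteq> bot"
    and f_meas: "f \<in> borel_measurable M" and s_meas: "\<And>t. s t \<in> borel_measurable M"
    and w: "integrable M w"
    and lim: "AE x in M. ((\<lambda>t. s t x) \<longlongrightarrow> f x) (at a)"
    and bound: "\<forall>\<^sub>F t in at a. AE x in M. norm (s t x) \<le> w x"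
  shows "integrable M f" and "((\<lambda>t. integral\<^sup>L M (s t)) \<longlongrightarrow> integral\<^sup>L M f) (at a)"
proof -
  have along_seq: "integrable M f \<and> (\<lambda>n. integral\<^sup>L M (s (S n))) \<longlonglongrightarrow> integral\<^sup>L M f"
    if S: "\<forall>n. S n \<noteq> a" "S \<longlonglongrightarrow> a" for S
  proof -
    have S_at: "filterlim S (at a) sequentially"
      using S by (intro filterlim_atI) auto
    obtain N where N: "\<And>n. N \<le> n \<Longrightarrow> AE x in M. norm (s (S n) x) \<le> w x"
      using filterlim_iff[THEN iffD1, OF S_at, rule_format, OF bound]
      by (auto simp: eventually_sequentially)
    have lim': "AE x in M. (\<lambda>n. s (S (n + N)) x) \<longlonglongrightarrow> f x"
      using lim
    proof eventually_elim
      case (elim x)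
      then show ?case
        by (intro LIMSEQ_ignore_initial_segment filterlim_compose[OF _ S_at])
    qed
    have bound': "AE x in M. norm (s (S (n + N)) x) \<le> w x" for n
      by (rule N) simp
    have "(\<lambda>n. integral\<^sup>L M (s (S (n + N)))) \<longlonglongrightarrow> integral\<^sup>L M f"
      by (rule integral_dominated_convergence[OF f_meas s_meas w lim' bound'])
    then have "(\<lambda>n. integral\<^sup>L M (s (S n))) \<longlonglongrightarrow> integral\<^sup>L M f"
      by (rule LIMSEQ_offset)
    then show ?thesis
      using integrable_dominated_convergence[OF f_meas s_meas w lim' bound'] by blast
  qed
  obtain S where "\<forall>n. S n \<noteq> a" "S \<longlonglongrightarrow> a"
    using sequentially_imp_eventually_at[of a "\<lambda>_. False"] nontriv
    by (auto simp: trivial_limit_def)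
  then show "integrable M f" using along_seq by blast
  show "((\<lambda>t. integral\<^sup>L M (s t)) \<longlongrightarrow> integral\<^sup>L M f) (at a)"
    using along_seq LIMSEQ_SEQ_conv[of a "\<lambda>t. integral\<^sup>L M (s t)"] by blast
qed

text \<open>An affine hyperplane with a nonzero coefficient is a null set for product
  Lebesgue measure: integrate first along the coordinate \<open>i\<close>, where the
  hyperplane meets each line in one point.\<close>

lemma hyperplane_null_sets_PiM:
  fixes c :: "'i \<Rightarrow> real"
  assumes I: "finite I" "i \<in> I" and ci: "c i \<noteq> 0"
  shows "{t \<in> space (PiM I (\<lambda>_. lborel)). (\<Sum>k\<in>I. c k * t k) = v} \<in> null_sets (PiM I (\<lambda>_. lborel))"
proof -
  define J where "J = I - {i}"
  have IJ: "I = insert i J" "finite J" "i \<notin> J" using I by (auto simp: J_def)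
  let ?M = "PiM I (\<lambda>_. lborel :: real measure)"
  let ?S = "{t \<in> space ?M. (\<Sum>k\<in>I. c k * t k) = v}"
  have S: "?S \<in> sets ?M" by measurable
  interpret product_sigma_finite "\<lambda>_. lborel :: real measure"
    by (simp add: product_sigma_finite_def lborel.sigma_finite_measure_axioms)
  have "emeasure ?M ?S = (\<integral>\<^sup>+t. indicator ?S t \<partial>?M)"
    using S by simp
  also have "\<dots> = (\<integral>\<^sup>+ x. (\<integral>\<^sup>+ y. indicator ?S (x(i := y)) \<partial>lborel) \<partial>(PiM J (\<lambda>_. lborel)))"
    using S IJ by (simp only: IJ(1)) (intro product_nn_integral_insert, auto)
  also have "\<dots> = (\<integral>\<^sup>+ x. 0 \<partial>(PiM J (\<lambda>_. lborel :: real measure)))"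
  proof (rule nn_integral_cong)
    fix x assume x: "x \<in> space (PiM J (\<lambda>_. lborel :: real measure))"
    define root where "root = (v - (\<Sum>k\<in>J. c k * x k)) / c i"
    have "indicator ?S (x(i := y)) = (indicator {root} y :: ennreal)" for y
    proof -
      have sp: "x(i := y) \<in> space ?M"
        using x IJ by (auto simp: space_PiM PiE_def extensional_def)
      have "(\<Sum>k\<in>I. c k * (x(i := y)) k) = c i * y + (\<Sum>k\<in>J. c k * x k)"
        using IJ by (simp add: sum.insert) (intro sum.cong, auto)
      then have "(\<Sum>k\<in>I. c k * (x(i := y)) k) = v \<longleftrightarrow> y = root"
        using ci unfolding root_def by (auto simp: field_simps)
      then show ?thesis using sp by (simp add: indicator_def)
    qed
    then show "(\<integral>\<^sup>+ y. indicator ?S (x(i := y)) \<partial>lborel) = 0"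
      by simp
  qed
  finally show ?thesis using S by (simp add: null_sets_def)
qed

lemma AE_PiM_affine_neq:
  fixes c :: "'i \<Rightarrow> real"
  assumes "finite I" "i \<in> I" "c i \<noteq> 0"
  shows "AE t in PiM I (\<lambda>_. lborel). (\<Sum>k\<in>I. c k * t k) \<noteq> v"
  using hyperplane_null_sets_PiM[of I i c v] assms by (intro AE_I') auto

lemma integral_pos_if_pos_on:
  fixes g :: "'a \<Rightarrow> real"
  assumes g: "integrable M g" "AE x in M. 0 \<le> g x"
    and S: "S \<in> sets M" "emeasure M S \<noteq> 0"
    and pos: "AE x in M. x \<in> S \<longrightarrow> 0 < g x"
  shows "0 < integral\<^sup>L M g"
proof (rule ccontr)
  assume "\<not> 0 < integral\<^sup>L M g"
  then have "integral\<^sup>L M g = 0" using integral_nonneg_AE[OF g(2)] by simp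
  then have "AE x in M. g x = 0" using integral_nonneg_eq_0_iff_AE[OF g] by simp
  with pos have "AE x in M. x \<notin> S" by eventually_elim auto
  then have "emeasure M S = 0"
    using AE_iff_measurable[OF S(1), of "\<lambda>x. x \<notin> S"] sets.sets_into_space[OF S(1)] by auto
  with S(2) show False ..
qed

lemma eventually_le_iff_of_tendsto:
  fixes a :: "'b \<Rightarrow> 'a::linorder_topology"
  assumes lim: "(a \<longlongrightarrow> l) F" and "l \<noteq> c"
  shows "\<forall>\<^sub>F y in F. a y \<le> c \<longleftrightarrow> l \<le> c"
proof (cases "l < c")
  case True
  from order_tendstoD(2)[OF lim True] show ?thesis
    by eventually_elim (use True in auto)
next
  case False
  with \<open>l \<noteq> c\<close> have "c < l" by auto
  from order_tendstoD(1)[OF lim this] show ?thesis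
    by eventually_elim (use \<open>c < l\<close> in auto)
qed

lemma abs_sum_le_box:
  fixes c t :: "'i \<Rightarrow> real"
  assumes "\<And>k. k \<in> I \<Longrightarrow> \<bar>t k\<bar> \<le> \<delta>"
  shows "\<bar>\<Sum>k\<in>I. c k * t k\<bar> \<le> \<delta> * (\<Sum>k\<in>I. \<bar>c k\<bar>)"
proof -
  have "\<bar>\<Sum>k\<in>I. c k * t k\<bar> \<le> (\<Sum>k\<in>I. \<bar>c k\<bar> * \<bar>t k\<bar>)"
    using sum_abs[of "\<lambda>k. c k * t k" I] by (simp add: abs_mult)
  also have "\<dots> \<le> (\<Sum>k\<in>I. \<bar>c k\<bar> * \<delta>)"
    using assms by (intro sum_mono mult_left_mono) auto
  finally show ?thesis by (simp add: sum_distrib_left mult.commute)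
qed

lemma box_sets_lebRn: "PiE {1..n-1} (\<lambda>_. {a..b::real}) \<in> sets (lebRn n)"
  unfolding lebRn_def by (intro sets_PiM_I_finite) auto

lemma emeasure_lebRn_box:
  assumes "a \<le> b"
  shows "emeasure (lebRn n) (PiE {1..n-1} (\<lambda>_. {a..b})) = ennreal (b - a) ^ (n - 1)"
proof -
  interpret product_sigma_finite "\<lambda>_. lborel :: real measure"
    by (simp add: product_sigma_finite_def lborel.sigma_finite_measure_axioms)
  show ?thesis
    unfolding lebRn_def using assms by (subst emeasure_PiM) auto
qed

lemma integrable_indicator_box:
  assumes "a \<le> b"
  shows "integrable (lebRn n) (indicator (PiE {1..n-1} (\<lambda>_. {a..b::real})) :: _ \<Rightarrow> real)"
  using box_sets_lebRn[of n a b] emeasure_lebRn_box[OF assms, of n]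
  by (simp add: integrable_indicator_iff sets.Int_space_eq2 power_less_top_ennreal)

lemma Dz_subset_box: "Dz n z \<subseteq> PiE {1..n-1} (\<lambda>_. {-1..1})"
  by (force simp: Dz_def lebRn_def space_PiM PiE_iff abs_le_iff)

definition psi_integrand :: "nat \<Rightarrow> complex \<Rightarrow> (nat \<Rightarrow> real) \<Rightarrow> real" where
  "psi_integrand n z t = indicator (Dz n z) t *
     (cmod (\<Sum>k=1..n-1. complex_of_real (t k) *
        (of_nat (k+1) * z ^ k - complex_of_real (Im (z ^ (k+1)) / Im z))))\<^sup>2"

definition A_integrand :: "nat \<Rightarrow> real \<Rightarrow> (nat \<Rightarrow> real) \<Rightarrow> real" where
  "A_integrand n x0 t = indicator (Dtilde n x0) t *
     (\<bar>\<Sum>k=1..n-1. real k * real (k+1) * t k * x0 ^ (k-1)\<bar>)\<^sup>2"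

text \<open>The sum that remains after factoring \<open>z - cnj z\<close> out of the
  integrand of \<open>psi\<close>.\<close>

definition quot2_sum :: "nat \<Rightarrow> (nat \<Rightarrow> real) \<Rightarrow> complex \<Rightarrow> complex \<Rightarrow> complex" where
  "quot2_sum n t z w = (\<Sum>k=1..n-1. complex_of_real (t k) * pow_quot2 k z w)"

lemma psi_integrand_measurable: "psi_integrand n z \<in> borel_measurable (lebRn n)"
proof -
  have "Dz n z \<in> sets (lebRn n)"
    unfolding Dz_def lebRn_def by measurable
  then show ?thesis
    unfolding psi_integrand_def lebRn_def by measurable
qed

lemma A_integrand_measurable: "A_integrand n x0 \<in> borel_measurable (lebRn n)"
proof -
  have "Dtilde n x0 \<in> sets (lebRn n)"
    unfolding Dtilde_def lebRn_def by measurable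
  then show ?thesis
    unfolding A_integrand_def lebRn_def by measurable
qed

lemma psi_sum_factor:
  assumes "Im z \<noteq> 0"
  shows "(\<Sum>k=1..n-1. complex_of_real (t k) *
            (of_nat (k+1) * z ^ k - complex_of_real (Im (z ^ (k+1)) / Im z)))
       = 2 * \<i> * complex_of_real (Im z) * quot2_sum n t z (cnj z)"
proof -
  have "of_nat (k+1) * z ^ k - complex_of_real (Im (z ^ (k+1)) / Im z)
          = 2 * \<i> * complex_of_real (Im z) * pow_quot2 k z (cnj z)" for k
    using Im_power_quot[OF assms, of k] pow_quot2_eq[of k z "cnj z"] complex_diff_cnj[of z]
    by (simp add: algebra_simps)
  then show ?thesis
    unfolding quot2_sum_def by (simp add: sum_distrib_left algebra_simps)
qed

lemma psi_integrand_scaled: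
  assumes "Im z \<noteq> 0"
  shows "psi_integrand n z t / (Im z)\<^sup>2 = indicator (Dz n z) t * (2 * cmod (quot2_sum n t z (cnj z)))\<^sup>2"
  using assms unfolding psi_integrand_def psi_sum_factor[OF assms]
  by (simp add: norm_mult power_mult_distrib)

lemma quot2_sum_diag:
  "2 * quot2_sum n t (of_real x0) (of_real x0)
     = complex_of_real (\<Sum>k=1..n-1. real k * real (k+1) * t k * x0 ^ (k-1))"
proof -
  have summand: "2 * (complex_of_real (t k) * pow_quot2 k (of_real x0) (of_real x0))
          = complex_of_real (real k * real (k+1) * t k * x0 ^ (k-1))" for k
  proof -
    have "2 * (complex_of_real (t k) * pow_quot2 k (of_real x0) (of_real x0))
          = complex_of_real (t k) * (2 * pow_quot2 k (of_real x0) (of_real x0))"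
      by (simp only: mult.left_commute)
    also have "\<dots> = complex_of_real (t k) * (of_nat (k * (k+1)) * of_real x0 ^ (k-1))"
      by (simp only: pow_quot2_diag)
    also have "\<dots> = complex_of_real (real k * real (k+1) * t k * x0 ^ (k-1))"
      by (simp add: algebra_simps)
    finally show ?thesis .
  qed
  show ?thesis
    by (simp only: quot2_sum_def sum_distrib_left of_real_sum summand)
qed

lemma psi_eq_scaled_integral:
  assumes "y \<noteq> 0"
  shows "psi n (Complex x0 y) = (\<integral>t. psi_integrand n (Complex x0 y) t / y\<^sup>2 \<partial>lebRn n) * \<bar>y\<bar>"
proof -
  have "y\<^sup>2 = \<bar>y\<bar> * \<bar>y\<bar>" by (simp add: power2_eq_square)
  then show ?thesis
    using assms unfolding psi_def psi_integrand_def[symmetric] by (simp add: field_simps)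
qed

subsection \<open>Pointwise limit of the rescaled integrand\<close>

lemma Complex_tendsto_real: "((\<lambda>y. Complex x0 y) \<longlongrightarrow> complex_of_real x0) (at (0::real))"
proof -
  have "((\<lambda>y. Complex x0 y) \<longlongrightarrow> Complex x0 0) (at (0::real))"
    by (intro tendsto_intros)
  moreover have "Complex x0 0 = complex_of_real x0" by (simp add: complex_eq_iff)
  ultimately show ?thesis by simp
qed

lemma cnj_Complex_tendsto_real: "((\<lambda>y. cnj (Complex x0 y)) \<longlongrightarrow> complex_of_real x0) (at (0::real))"
  using tendsto_cnj[OF Complex_tendsto_real[of x0]] by simp

lemma eventually_Im_Complex_nonzero: "\<forall>\<^sub>F y in at (0::real). Im (Complex x0 y) \<noteq> 0"
  by (simp add: eventually_at_filter)

lemma Dz_constraint1_tendsto: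
  "((\<lambda>y. cmod (Complex x0 y * (\<Sum>k=1..n-1. complex_of_real (t k) *
       (Complex x0 y ^ k - complex_of_real (Im (Complex x0 y ^ (k+1)) / Im (Complex x0 y))))))
     \<longlongrightarrow> \<bar>\<Sum>k=1..n-1. real k * t k * x0 ^ (k+1)\<bar>) (at 0)"
proof -
  let ?Z = "\<lambda>y. Complex x0 y"
  have "((\<lambda>y. cmod (?Z y * (\<Sum>k=1..n-1. complex_of_real (t k) * (?Z y ^ k - pow_quot k (?Z y) (cnj (?Z y))))))
     \<longlongrightarrow> cmod (of_real x0 * (\<Sum>k=1..n-1. complex_of_real (t k) *
              (of_real x0 ^ k - pow_quot k (of_real x0) (of_real x0))))) (at 0)"
    by (intro tendsto_intros Complex_tendsto_real cnj_Complex_tendsto_real)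
  also have "of_real x0 * (\<Sum>k=1..n-1. complex_of_real (t k) *
              (of_real x0 ^ k - pow_quot k (of_real x0) (of_real x0)))
           = complex_of_real (- (\<Sum>k=1..n-1. real k * t k * x0 ^ (k+1)))"
    by (simp add: pow_quot_diag sum_distrib_left sum_negf[symmetric] del: of_nat_Suc)
       (intro sum.cong refl, simp add: algebra_simps)
  also have "cmod (complex_of_real (- (\<Sum>k=1..n-1. real k * t k * x0 ^ (k+1))))
           = \<bar>\<Sum>k=1..n-1. real k * t k * x0 ^ (k+1)\<bar>"
    by (simp only: norm_of_real abs_minus_cancel)
  finally show ?thesis
  proof (rule Lim_transform_eventually[OF _ eventually_mono[OF eventually_Im_Complex_nonzero[of x0]]])
    fix y assume y: "Im (?Z y) \<noteq> 0"
    show "cmod (?Z y * (\<Sum>k=1..n-1. complex_of_real (t k) * (?Z y ^ k - pow_quot k (?Z y) (cnj (?Z y)))))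
        = cmod (?Z y * (\<Sum>k=1..n-1. complex_of_real (t k) *
            (?Z y ^ k - complex_of_real (Im (?Z y ^ (k+1)) / Im (?Z y)))))"
      by (simp only: Im_power_quot[OF y])
  qed
qed

lemma Dz_constraint2_tendsto:
  "((\<lambda>y. \<bar>(1 / Im (Complex x0 y)) * (\<Sum>k=1..n-1. t k * Im (Complex x0 y ^ (k+1)))\<bar>)
     \<longlongrightarrow> \<bar>\<Sum>k=1..n-1. real (k+1) * t k * x0 ^ k\<bar>) (at 0)"
proof -
  let ?Z = "\<lambda>y. Complex x0 y"
  have "((\<lambda>y. \<bar>\<Sum>k=1..n-1. t k * Re (pow_quot k (?Z y) (cnj (?Z y)))\<bar>)
     \<longlongrightarrow> \<bar>\<Sum>k=1..n-1. t k * Re (pow_quot k (of_real x0) (of_real x0))\<bar>) (at 0)"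
    by (intro tendsto_intros Complex_tendsto_real cnj_Complex_tendsto_real)
  also have "(\<Sum>k=1..n-1. t k * Re (pow_quot k (of_real x0) (of_real x0 :: complex)))
           = (\<Sum>k=1..n-1. real (k+1) * t k * x0 ^ k)"
    by (intro sum.cong refl) (simp add: pow_quot_diag del: of_nat_Suc)
  finally show ?thesis
  proof (rule Lim_transform_eventually[OF _ eventually_mono[OF eventually_Im_Complex_nonzero[of x0]]])
    fix y assume y: "Im (Complex x0 y) \<noteq> 0"
    have "Re (pow_quot k (?Z y) (cnj (?Z y))) = Im (?Z y ^ (k+1)) / Im (?Z y)" for k
      using arg_cong[OF Im_power_quot[OF y, of k], of Re] by simp
    then show "\<bar>\<Sum>k=1..n-1. t k * Re (pow_quot k (?Z y) (cnj (?Z y)))\<bar>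
        = \<bar>(1 / Im (?Z y)) * (\<Sum>k=1..n-1. t k * Im (?Z y ^ (k+1)))\<bar>"
      by (simp add: sum_distrib_left)
  qed
qed

lemma indicator_Dz_eventually:
  assumes t: "t \<in> space (lebRn n)"
    and L1: "\<bar>\<Sum>k=1..n-1. real k * t k * x0 ^ (k+1)\<bar> \<noteq> 1"
    and L2: "\<bar>\<Sum>k=1..n-1. real (k+1) * t k * x0 ^ k\<bar> \<noteq> 1"
  shows "\<forall>\<^sub>F y in at 0. indicator (Dz n (Complex x0 y)) t = (indicator (Dtilde n x0) t :: real)"
  using eventually_le_iff_of_tendsto[OF Dz_constraint1_tendsto L1]
    eventually_le_iff_of_tendsto[OF Dz_constraint2_tendsto L2]
  by eventually_elim (simp add: Dz_def Dtilde_def t indicator_def)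

lemma tendsto_quot2_sum_at_real:
  "((\<lambda>y. quot2_sum n t (Complex x0 y) (cnj (Complex x0 y))) \<longlongrightarrow> quot2_sum n t (of_real x0) (of_real x0)) (at 0)"
  unfolding quot2_sum_def by (intro tendsto_intros Complex_tendsto_real cnj_Complex_tendsto_real)

lemma psi_integrand_scaled_tendsto:
  assumes t: "t \<in> space (lebRn n)"
    and L1: "\<bar>\<Sum>k=1..n-1. real k * t k * x0 ^ (k+1)\<bar> \<noteq> 1"
    and L2: "\<bar>\<Sum>k=1..n-1. real (k+1) * t k * x0 ^ k\<bar> \<noteq> 1"
  shows "((\<lambda>y. psi_integrand n (Complex x0 y) t / y\<^sup>2) \<longlongrightarrow> A_integrand n x0 t) (at 0)"
proof -
  let ?Z = "\<lambda>y. Complex x0 y"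
  have "((\<lambda>y. indicator (Dtilde n x0) t * (2 * cmod (quot2_sum n t (?Z y) (cnj (?Z y))))\<^sup>2)
      \<longlongrightarrow> indicator (Dtilde n x0) t * (2 * cmod (quot2_sum n t (of_real x0) (of_real x0)))\<^sup>2) (at 0)"
    by (intro tendsto_intros tendsto_quot2_sum_at_real)
  also have "2 * cmod (quot2_sum n t (of_real x0) (of_real x0))
           = cmod (2 * quot2_sum n t (of_real x0) (of_real x0))"
    by (simp add: norm_mult)
  also have "\<dots> = \<bar>\<Sum>k=1..n-1. real k * real (k+1) * t k * x0 ^ (k-1)\<bar>"
    by (simp only: quot2_sum_diag norm_of_real)
  finally show ?thesis
    unfolding A_integrand_def
  proof (rule Lim_transform_eventually)
    show "\<forall>\<^sub>F y in at 0. indicator (Dtilde n x0) t * (2 * cmod (quot2_sum n t (?Z y) (cnj (?Z y))))\<^sup>2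
        = psi_integrand n (?Z y) t / y\<^sup>2"
      using eventually_Im_Complex_nonzero[of x0] indicator_Dz_eventually[OF t L1 L2]
    proof eventually_elim
      case (elim y)
      then show ?case
        using psi_integrand_scaled[of "?Z y" n t] by simp
    qed
  qed
qed

text \<open>The boundary hyperplanes are a null set (for \<open>x0 \<noteq> 0\<close> the
  coefficient of \<open>t_1\<close> is nonzero; for \<open>x0 = 0\<close> both sums
  vanish).\<close>

lemma AE_off_boundary:
  assumes "n \<ge> 2"
  shows "AE t in lebRn n. \<bar>\<Sum>k=1..n-1. real k * t k * x0 ^ (k+1)\<bar> \<noteq> 1
                         \<and> \<bar>\<Sum>k=1..n-1. real (k+1) * t k * x0 ^ k\<bar> \<noteq> 1"
proof (cases "x0 = 0")
  case True
  then show ?thesis by (auto intro!: sum.neutral)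
next
  case False
  have one: "1 \<in> {1..n-1}" using assms by simp
  have e1: "(\<Sum>k=1..n-1. real k * t k * x0 ^ (k+1)) = (\<Sum>k\<in>{1..n-1}. (real k * x0 ^ (k+1)) * t k)"
    and e2: "(\<Sum>k=1..n-1. real (k+1) * t k * x0 ^ k) = (\<Sum>k\<in>{1..n-1}. (real (k+1) * x0 ^ k) * t k)"
    for t :: "nat \<Rightarrow> real" by (simp_all add: mult_ac)
  have "AE t in lebRn n. (\<Sum>k\<in>{1..n-1}. (real k * x0 ^ (k+1)) * t k) \<noteq> v"
    and "AE t in lebRn n. (\<Sum>k\<in>{1..n-1}. (real (k+1) * x0 ^ k) * t k) \<noteq> v" for v
    unfolding lebRn_def using False one by (intro AE_PiM_affine_neq[where i=1]; simp)+
  then have "AE t in lebRn n. (\<Sum>k\<in>{1..n-1}. (real k * x0 ^ (k+1)) * t k) \<noteq> 1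
      \<and> (\<Sum>k\<in>{1..n-1}. (real k * x0 ^ (k+1)) * t k) \<noteq> -1
      \<and> (\<Sum>k\<in>{1..n-1}. (real (k+1) * x0 ^ k) * t k) \<noteq> 1
      \<and> (\<Sum>k\<in>{1..n-1}. (real (k+1) * x0 ^ k) * t k) \<noteq> -1"
    by (simp only: AE_conj_iff)
  then show ?thesis
    unfolding e1 e2 by eventually_elim (auto simp: abs_if)
qed

subsection \<open>Domination and convergence of the integrals\<close>

text \<open>For \<open>0 < |y| \<le> 1\<close> the rescaled integrand is bounded by a
  constant times the indicator of the unit cube, since the divided differences are
  continuous on the compact set \<open>|y| \<le> 1\<close>.\<close>

lemma psi_integrand_scaled_bound:
  obtains B :: real where
    "\<And>y t. y \<noteq> 0 \<Longrightarrow> \<bar>y\<bar> \<le> 1 \<Longrightarrow>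
       \<bar>psi_integrand n (Complex x0 y) t / y\<^sup>2\<bar> \<le> B * indicator (PiE {1..n-1} (\<lambda>_. {-1..1})) t"
proof -
  define h where "h y = (\<Sum>k=1..n-1. cmod (pow_quot2 k (Complex x0 y) (cnj (Complex x0 y))))" for y
  have "continuous_on (cball 0 1) h"
    unfolding h_def pow_quot2_def pow_quot_def by (intro continuous_intros)
  then have "bounded (h ` cball 0 1)"
    by (intro compact_imp_bounded compact_continuous_image) simp_all
  then obtain C where "\<forall>v \<in> h ` cball 0 1. norm v \<le> C"
    unfolding bounded_iff by blast
  then have C: "\<And>y. y \<in> cball 0 1 \<Longrightarrow> \<bar>h y\<bar> \<le> C" by auto
  show ?thesis
  proof
    fix y :: real and t :: "nat \<Rightarrow> real"
    assume y: "y \<noteq> 0" "\<bar>y\<bar> \<le> 1"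
    let ?q = "quot2_sum n t (Complex x0 y) (cnj (Complex x0 y))"
    have C_nonneg: "0 \<le> C" using C[of 0] by simp
    show "\<bar>psi_integrand n (Complex x0 y) t / y\<^sup>2\<bar> \<le> (2 * C)\<^sup>2 * indicator (PiE {1..n-1} (\<lambda>_. {-1..1})) t"
    proof (cases "t \<in> Dz n (Complex x0 y)")
      case False
      then show ?thesis using C_nonneg by (simp add: psi_integrand_def indicator_def)
    next
      case True
      then have box: "\<And>k. k \<in> {1..n-1} \<Longrightarrow> \<bar>t k\<bar> \<le> 1" by (simp add: Dz_def)
      have "cmod ?q \<le> (\<Sum>k=1..n-1. cmod (complex_of_real (t k) * pow_quot2 k (Complex x0 y) (cnj (Complex x0 y))))"
        unfolding quot2_sum_def by (rule norm_sum)
      also have "\<dots> \<le> h y"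
        unfolding h_def using box by (intro sum_mono) (simp add: norm_mult mult_left_le_one_le)
      also have "\<dots> \<le> C" using C[of y] y by simp
      finally have "(2 * cmod ?q)\<^sup>2 \<le> (2 * C)\<^sup>2" by (intro power_mono) auto
      then show ?thesis
        using True Dz_subset_box[of n "Complex x0 y"] psi_integrand_scaled[of "Complex x0 y" n t] y
        by auto
    qed
  qed
qed

lemma psi_scaled_integral_tendsto:
  assumes "n \<ge> 2"
  shows "integrable (lebRn n) (A_integrand n x0)"
    and "((\<lambda>y. \<integral>t. psi_integrand n (Complex x0 y) t / y\<^sup>2 \<partial>lebRn n) \<longlongrightarrow> Aconst n x0) (at 0)"
proof -
  obtain B where B: "\<And>y t. y \<noteq> 0 \<Longrightarrow> \<bar>y\<bar> \<le> 1 \<Longrightarrow>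
       \<bar>psi_integrand n (Complex x0 y) t / y\<^sup>2\<bar> \<le> B * indicator (PiE {1..n-1} (\<lambda>_. {-1..1})) t"
    using psi_integrand_scaled_bound[of n x0] by blast
  have near0: "\<forall>\<^sub>F y in at (0::real). y \<noteq> 0 \<and> \<bar>y\<bar> \<le> 1"
    unfolding eventually_at by (intro exI[of _ 1]) (auto simp: dist_real_def)
  have lim: "AE t in lebRn n. ((\<lambda>y. psi_integrand n (Complex x0 y) t / y\<^sup>2) \<longlongrightarrow> A_integrand n x0 t) (at 0)"
    using AE_off_boundary[OF assms, of x0] AE_space
    by eventually_elim (auto intro: psi_integrand_scaled_tendsto)
  have bound: "\<forall>\<^sub>F y in at 0. AE t in lebRn n.
      norm (psi_integrand n (Complex x0 y) t / y\<^sup>2) \<le> B * indicator (PiE {1..n-1} (\<lambda>_. {-1..1})) t"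
    using near0 by eventually_elim (intro AE_I2, metis B real_norm_def)
  have dominator: "integrable (lebRn n) (\<lambda>t. B * indicator (PiE {1..n-1} (\<lambda>_. {-1..1::real})) t)"
    by (intro integrable_mult_right integrable_indicator_box) simp
  note dc = dominated_convergence_at[OF at_neq_bot A_integrand_measurable _ dominator lim bound]
  show "integrable (lebRn n) (A_integrand n x0)"
    by (rule dc) (intro borel_measurable_divide psi_integrand_measurable borel_measurable_const)
  show "((\<lambda>y. \<integral>t. psi_integrand n (Complex x0 y) t / y\<^sup>2 \<partial>lebRn n) \<longlongrightarrow> Aconst n x0) (at 0)"
    unfolding Aconst_def A_integrand_def[symmetric]
    by (rule dc) (intro borel_measurable_divide psi_integrand_measurable borel_measurable_const)
qed

subsection \<open>Positivity of the constant\<close>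

text \<open>\<open>D~_x0\<close> contains a cube around the origin, because both
  constraint sums are linear in \<open>t\<close>.\<close>

lemma Dtilde_contains_box:
  obtains \<delta> :: real where "0 < \<delta>" "PiE {1..n-1} (\<lambda>_. {-\<delta>..\<delta>}) \<subseteq> Dtilde n x0"
proof -
  define K1 where "K1 = (\<Sum>k\<in>{1..n-1}. \<bar>real k * x0 ^ (k+1)\<bar>)"
  define K2 where "K2 = (\<Sum>k\<in>{1..n-1}. \<bar>real (k+1) * x0 ^ k\<bar>)"
  define \<delta> where "\<delta> = 1 / (1 + K1 + K2)"
  have K: "0 \<le> K1" "0 \<le> K2" unfolding K1_def K2_def by (simp_all add: sum_nonneg)
  then have \<delta>: "0 < \<delta>" "\<delta> \<le> 1" "\<delta> * K1 \<le> 1" "\<delta> * K2 \<le> 1"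
    by (auto simp: \<delta>_def field_simps)
  have "PiE {1..n-1} (\<lambda>_. {-\<delta>..\<delta>}) \<subseteq> Dtilde n x0"
  proof
    fix t assume t: "t \<in> PiE {1..n-1} (\<lambda>_. {-\<delta>..\<delta>})"
    then have small: "\<And>k. k \<in> {1..n-1} \<Longrightarrow> \<bar>t k\<bar> \<le> \<delta>" by (force simp: PiE_iff abs_le_iff)
    have "\<bar>\<Sum>k=1..n-1. real k * t k * x0 ^ (k+1)\<bar> = \<bar>\<Sum>k\<in>{1..n-1}. (real k * x0 ^ (k+1)) * t k\<bar>"
      by (simp add: mult_ac)
    also have "\<dots> \<le> \<delta> * K1" unfolding K1_def by (rule abs_sum_le_box[OF small])
    finally have c1: "\<bar>\<Sum>k=1..n-1. real k * t k * x0 ^ (k+1)\<bar> \<le> 1" using \<delta> by linarith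
    have "\<bar>\<Sum>k=1..n-1. real (k+1) * t k * x0 ^ k\<bar> = \<bar>\<Sum>k\<in>{1..n-1}. (real (k+1) * x0 ^ k) * t k\<bar>"
      by (simp add: mult_ac)
    also have "\<dots> \<le> \<delta> * K2" unfolding K2_def by (rule abs_sum_le_box[OF small])
    finally have c2: "\<bar>\<Sum>k=1..n-1. real (k+1) * t k * x0 ^ k\<bar> \<le> 1" using \<delta> by linarith
    have "t \<in> space (lebRn n)" using t by (auto simp: lebRn_def space_PiM PiE_iff)
    moreover have "\<forall>k\<in>{1..n-1}. \<bar>t k\<bar> \<le> 1" using small \<delta>(2) by (meson order_trans)
    ultimately show "t \<in> Dtilde n x0" using c1 c2 by (simp add: Dtilde_def)
  qed
  with \<delta>(1) show ?thesis by (rule that)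
qed

text \<open>The integrand of \<open>A\<close> is positive almost everywhere on that cube:
  the coefficient of \<open>t_1\<close> in its polynomial is 2.\<close>

lemma Aconst_pos:
  assumes "n \<ge> 2"
  shows "0 < Aconst n x0"
proof -
  obtain \<delta> :: real where \<delta>: "0 < \<delta>" and box: "PiE {1..n-1} (\<lambda>_. {-\<delta>..\<delta>}) \<subseteq> Dtilde n x0"
    using Dtilde_contains_box by blast
  have poly_nonzero: "AE t in lebRn n. (\<Sum>k=1..n-1. real k * real (k+1) * t k * x0 ^ (k-1)) \<noteq> 0"
  proof -
    have "AE t in lebRn n. (\<Sum>k\<in>{1..n-1}. (real k * real (k+1) * x0 ^ (k-1)) * t k) \<noteq> 0"
      unfolding lebRn_def using assms by (intro AE_PiM_affine_neq[where i=1]) auto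
    then show ?thesis by (simp add: mult_ac)
  qed
  have "0 < integral\<^sup>L (lebRn n) (A_integrand n x0)"
  proof (rule integral_pos_if_pos_on)
    show "integrable (lebRn n) (A_integrand n x0)"
      by (rule psi_scaled_integral_tendsto(1)[OF assms])
    show "AE t in lebRn n. 0 \<le> A_integrand n x0 t"
      by (simp add: A_integrand_def)
    show "PiE {1..n-1} (\<lambda>_. {-\<delta>..\<delta>}) \<in> sets (lebRn n)"
      by (rule box_sets_lebRn)
    show "emeasure (lebRn n) (PiE {1..n-1} (\<lambda>_. {-\<delta>..\<delta>})) \<noteq> 0"
      using \<delta> by (subst emeasure_lebRn_box) auto
    show "AE t in lebRn n. t \<in> PiE {1..n-1} (\<lambda>_. {-\<delta>..\<delta>}) \<longrightarrow> 0 < A_integrand n x0 t"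
      using poly_nonzero by eventually_elim (use box in \<open>auto simp: A_integrand_def\<close>)
  qed
  then show ?thesis unfolding Aconst_def A_integrand_def .
qed

theorem proposition2:
  fixes n :: nat and x0 :: real
  assumes "n \<ge> 2"
  shows "(\<lambda>y::real. psi n (Complex x0 y)) \<sim>[at 0] (\<lambda>y. Aconst n x0 * \<bar>y\<bar>)"
proof -
  let ?I = "\<lambda>y. \<integral>t. psi_integrand n (Complex x0 y) t / y\<^sup>2 \<partial>lebRn n"
  have "?I \<sim>[at 0] (\<lambda>_. Aconst n x0)"
    using psi_scaled_integral_tendsto(2)[OF assms, of x0] Aconst_pos[OF assms, of x0]
    by (intro tendsto_imp_asymp_equiv_const) auto
  then have "(\<lambda>y. ?I y * \<bar>y\<bar>) \<sim>[at 0] (\<lambda>y. Aconst n x0 * \<bar>y\<bar>)"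
    by (intro asymp_equiv_mult asymp_equiv_refl)
  moreover have "\<forall>\<^sub>F y in at 0. ?I y * \<bar>y\<bar> = psi n (Complex x0 y)"
    unfolding eventually_at_filter by (simp add: psi_eq_scaled_integral)
  ultimately show ?thesis
    by (rule asymp_equiv_transfer) simp
qed

end
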